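(* For every $i\in\{1,\ldots,s\}$ and every non-negative integer $r$, $$\boldsymbol{\beta}_G\circ\gamma_i^r=\gamma_i^{r+1}\circ\beta_{G_i}.$$
   Context: Let $G$ be a finite group, $p$ a prime dividing $|G|$, and $\mathbb{F}_p$ the field with $p$ elements. $G$ acts on $\mathbb{F}_pG$ and on $\mathbb{Z}/p^2[G]$ by conjugation. Let $\boldsymbol{\beta}_G:\mathrm{H}^r(G,\mathbb{F}_pG)\to\mathrm{H}^{r+1}(G,\mathbb{F}_pG)$ be the connecting homomorphism of the short exact sequence of $\mathbb{Z}G$-modules $0\to\mathbb{F}_pG\to\mathbb{Z}/p^2[G]\to\mathbb{F}_pG\to0$, where the first map sends $\widehat a g\mapsto\overline{pa}g$ and the second is reduction mod $p$ of the coefficients. For a subgroup $H$, $\beta_H:\mathrm{H}^r(H,\mathbb{F}_p)\to\mathrm{H}^{r+1}(H,\mathbb{F}_p)$ is the usual Bockstein homomorphism of group cohomology (connecting map of $0\to\mathbb{F}_p\to\mathbb{Z}/p^2\to\mathbb{F}_p\to0$). Let $g_1=1,g_2,\ldots,g_s$ be representatives of the conjugacy classes of $G$ and $G_i=C_G(g_i)$. Let $\theta_{g_i}:\mathbb{F}_p\to\mathbb{F}_pG$, $\lambda\mapsto\lambda g_i$ (a $\mathbb{F}_pG_i$-module map), and $\gamma_i:=\mathrm{tr}_{G_i}^G\circ\theta_{g_i}^*:\mathrm{H}^*(G_i,\mathbb{F}_p)\to\mathrm{H}^*(G,\mathbb{F}_pG)$; $\gamma_i^r$ denotes its component in degree $r$.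 *)

theory Defs
  imports "HOL-Algebra.Algebra" "HOL-Library.Function_Algebras"
begin

(* A K-module M with coefficients in Z/n is represented by an integer-valued
   abelian group 'm together with an action act and a predicate zr n u
   meaning "u = 0 in M (mod n)". *)

definition tuples :: "'a set \<Rightarrow> nat \<Rightarrow> 'a list set" where
  "tuples K n = {xs. set xs \<subseteq> K \<and> length xs = n}"

definition del_at :: "nat \<Rightarrow> 'a list \<Rightarrow> 'a list" where
  "del_at j xs = take j xs @ drop (Suc j) xs"

definition hcobd :: "('a list \<Rightarrow> 'm::ab_group_add) \<Rightarrow> 'a list \<Rightarrow> 'm" where
  "hcobd f xs = (\<Sum>j<length xs. if even j then f (del_at j xs) else - f (del_at j xs))"

definition hcochain :: "('g,'b) monoid_scheme \<Rightarrow> 'g set \<Rightarrow> ('g \<Rightarrow> 'm::ab_group_add \<Rightarrow> 'm)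
    \<Rightarrow> (int \<Rightarrow> 'm \<Rightarrow> bool) \<Rightarrow> int \<Rightarrow> nat \<Rightarrow> ('g list \<Rightarrow> 'm) \<Rightarrow> bool" where
  "hcochain G K act zr n r f =
     (\<forall>xs\<in>tuples K (Suc r). \<forall>k\<in>K. zr n (f (map (\<lambda>x. k \<otimes>\<^bsub>G\<^esub> x) xs) - act k (f xs)))"

definition hcocycle :: "('g,'b) monoid_scheme \<Rightarrow> 'g set \<Rightarrow> ('g \<Rightarrow> 'm::ab_group_add \<Rightarrow> 'm)
    \<Rightarrow> (int \<Rightarrow> 'm \<Rightarrow> bool) \<Rightarrow> int \<Rightarrow> nat \<Rightarrow> ('g list \<Rightarrow> 'm) \<Rightarrow> bool" where
  "hcocycle G K act zr n r f =
     (hcochain G K act zr n r f \<and> (\<forall>xs\<in>tuples K (Suc (Suc r)). zr n (hcobd f xs)))"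

definition cohom_eq :: "('g,'b) monoid_scheme \<Rightarrow> 'g set \<Rightarrow> ('g \<Rightarrow> 'm::ab_group_add \<Rightarrow> 'm)
    \<Rightarrow> (int \<Rightarrow> 'm \<Rightarrow> bool) \<Rightarrow> int \<Rightarrow> nat \<Rightarrow> ('g list \<Rightarrow> 'm) \<Rightarrow> ('g list \<Rightarrow> 'm) \<Rightarrow> bool" where
  "cohom_eq G K act zr n r u v =
     (case r of
        0 \<Rightarrow> (\<forall>xs\<in>tuples K 1. zr n (u xs - v xs))
      | Suc q \<Rightarrow> (\<exists>h. hcochain G K act zr n q h \<and>
                    (\<forall>xs\<in>tuples K (Suc r). zr n (u xs - v xs - hcobd h xs))))"

(* Connecting homomorphism of 0 -> M/p -> M/p^2 -> M/p -> 0 (multiplication by p,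
   reduction mod p): lift the cocycle f to a cochain F with values mod p^2,
   take its coboundary and divide by p. dv p divides by p. *)
definition bockstein :: "('g,'b) monoid_scheme \<Rightarrow> 'g set \<Rightarrow> ('g \<Rightarrow> 'm::ab_group_add \<Rightarrow> 'm)
    \<Rightarrow> (int \<Rightarrow> 'm \<Rightarrow> bool) \<Rightarrow> (int \<Rightarrow> 'm \<Rightarrow> 'm) \<Rightarrow> nat \<Rightarrow> nat \<Rightarrow> ('g list \<Rightarrow> 'm) \<Rightarrow> 'g list \<Rightarrow> 'm" where
  "bockstein G K act zr dv p r f =
     (let F = (SOME F. hcochain G K act zr (int p ^ 2) r F \<and>
                        (\<forall>xs\<in>tuples K (Suc r). zr (int p) (F xs - f xs)))
      in (\<lambda>xs. dv (int p) (hcobd F xs)))"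

(* Coefficients F_p (trivial action), represented by integers *)
definition zrF :: "int \<Rightarrow> int \<Rightarrow> bool" where "zrF n u = (u mod n = 0)"
definition actT :: "'g \<Rightarrow> int \<Rightarrow> int" where "actT k u = u"
definition dvF :: "int \<Rightarrow> int \<Rightarrow> int" where "dvF p u = u div p"

(* Coefficients F_p G: coefficient functions on carrier G, with conjugation action
   x . (sum a_y y) = sum a_y (x y x^-1), i.e. (x.u)(y) = u(x^-1 y x) *)
definition zrFG :: "('g,'b) monoid_scheme \<Rightarrow> int \<Rightarrow> ('g \<Rightarrow> int) \<Rightarrow> bool" where
  "zrFG G n u = (\<forall>y\<in>carrier G. u y mod n = 0)"
definition conj_act :: "('g,'b) monoid_scheme \<Rightarrow> 'g \<Rightarrow> ('g \<Rightarrow> int) \<Rightarrow> ('g \<Rightarrow> int)" where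
  "conj_act G x u = (\<lambda>y. u (inv\<^bsub>G\<^esub> x \<otimes>\<^bsub>G\<^esub> y \<otimes>\<^bsub>G\<^esub> x))"
definition dvFG :: "int \<Rightarrow> ('g \<Rightarrow> int) \<Rightarrow> ('g \<Rightarrow> int)" where
  "dvFG p u = (\<lambda>y. u y div p)"

definition centralizer :: "('g,'b) monoid_scheme \<Rightarrow> 'g \<Rightarrow> 'g set" where
  "centralizer G g = {x\<in>carrier G. x \<otimes>\<^bsub>G\<^esub> g = g \<otimes>\<^bsub>G\<^esub> x}"

definition left_cosets :: "('g,'b) monoid_scheme \<Rightarrow> 'g set \<Rightarrow> 'g set set" where
  "left_cosets G H = (\<lambda>a. l_coset G a H) ` carrier G"

(* rho y = y * (chosen representative of H y)^-1, an H-equivariant map G -> H *)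
definition rho :: "('g,'b) monoid_scheme \<Rightarrow> 'g set \<Rightarrow> 'g \<Rightarrow> 'g" where
  "rho G H y = y \<otimes>\<^bsub>G\<^esub> inv\<^bsub>G\<^esub> (SOME z. z \<in> r_coset G H y)"

definition transfer :: "('g,'b) monoid_scheme \<Rightarrow> 'g set \<Rightarrow> ('g \<Rightarrow> 'm::ab_group_add \<Rightarrow> 'm)
    \<Rightarrow> ('g list \<Rightarrow> 'm) \<Rightarrow> 'g list \<Rightarrow> 'm" where
  "transfer G H act f xs =
     (\<Sum>C\<in>left_cosets G H. let s = (SOME s. s \<in> C)
        in act s (f (map (\<lambda>y. rho G H (inv\<^bsub>G\<^esub> s \<otimes>\<^bsub>G\<^esub> y)) xs)))"

definition theta :: "'g \<Rightarrow> int \<Rightarrow> ('g \<Rightarrow> int)" where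
  "theta g u = (\<lambda>x. if x = g then u else 0)"

definition gamma :: "('g,'b) monoid_scheme \<Rightarrow> 'g \<Rightarrow> ('g list \<Rightarrow> int) \<Rightarrow> 'g list \<Rightarrow> ('g \<Rightarrow> int)" where
  "gamma G g f = transfer G (centralizer G g) (conj_act G) (\<lambda>xs. theta g (f xs))"

end

theory Submission
  imports Defs
begin

text \<open>Both sides are computed from integer lifts. Since the centralizer \<open>H\<close> acts trivially on
  \<open>\<bbbF>\<^sub>p\<close>, the cocycle \<open>f\<close> has a strictly \<open>H\<close>-invariant lift \<open>F\<close>; its image \<open>\<gamma> F\<close> is a
  \<open>G\<close>-equivariant lift of \<open>\<gamma> f\<close> modulo \<open>p\<^sup>2\<close>. As \<open>\<gamma>\<close> commutes with the coboundary and with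
  division by \<open>p\<close>, the Bockstein of \<open>\<gamma> f\<close> computed from \<open>\<gamma> F\<close> is exactly \<open>\<gamma> (\<beta>\<^sub>H f)\<close>. Any other
  lift \<open>F'\<close> changes the Bockstein by the coboundary of \<open>(F' - \<gamma> F) / p\<close>, so the classes agree.\<close>

lemma sum_fun_apply: "sum f A x = (\<Sum>a\<in>A. f a x)"
  by (induction A rule: infinite_finite_induct) auto

lemma sum_div_if_dvd:
  fixes m :: "'a::euclidean_semiring_cancel"
  shows "(\<And>a. a \<in> A \<Longrightarrow> m dvd f a) \<Longrightarrow> sum f A div m = (\<Sum>a\<in>A. f a div m)"
  by (induction A rule: infinite_finite_induct) (auto simp: div_plus_div_distrib_dvd_left dvd_sum)

lemma hcobd_apply: "hcobd F xs y = hcobd (\<lambda>ws. F ws y) xs"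
  unfolding hcobd_def sum_fun_apply by (rule sum.cong) auto

lemma hcobd_cong:
  "(\<And>j. j < length xs \<Longrightarrow> a (del_at j xs) = b (del_at j xs)) \<Longrightarrow> hcobd a xs = hcobd b xs"
  unfolding hcobd_def by (rule sum.cong) auto

lemma hcobd_add: "hcobd (\<lambda>w. a w + b w) xs = hcobd a xs + hcobd b xs"
  unfolding hcobd_def sum.distrib[symmetric] by (rule sum.cong) auto

lemma hcobd_mult: "hcobd (\<lambda>w. (c::'a::ring) * a w) xs = c * hcobd a xs"
  unfolding hcobd_def sum_distrib_left by (rule sum.cong) auto

lemma hcobd_dvd:
  "(\<And>j. j < length xs \<Longrightarrow> (c::'a::comm_ring_1) dvd a (del_at j xs)) \<Longrightarrow> c dvd hcobd a xs"
  unfolding hcobd_def by (rule dvd_sum) auto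

lemma del_at_tuples: "xs \<in> tuples K (Suc n) \<Longrightarrow> j < length xs \<Longrightarrow> del_at j xs \<in> tuples K n"
  unfolding tuples_def del_at_def using set_take_subset set_drop_subset by fastforce

lemma map_del_at: "map f (del_at j xs) = del_at j (map f xs)"
  by (simp add: del_at_def take_map drop_map)

lemma hcobd_dvd_if_congruent:
  assumes "(c::'a::comm_ring_1) dvd hcobd b xs"
    and "\<And>j. j < length xs \<Longrightarrow> c dvd a (del_at j xs) - b (del_at j xs)"
  shows "c dvd hcobd a xs"
proof -
  have "hcobd a xs = hcobd (\<lambda>w. a w - b w) xs + hcobd b xs"
    by (simp add: hcobd_add[symmetric])
  then show ?thesis using assms hcobd_dvd[of xs c "\<lambda>w. a w - b w"] by simp
qed

lemma zrF_hcobd_of_congruent: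
  assumes "\<forall>ws\<in>tuples K (Suc (Suc r)). zrF m (hcobd f ws)"
    and "\<forall>xs\<in>tuples K (Suc r). zrF m (F xs - f xs)"
  shows "\<forall>ws\<in>tuples K (Suc (Suc r)). zrF m (hcobd F ws)"
proof
  fix ws assume ws: "ws \<in> tuples K (Suc (Suc r))"
  have "m dvd hcobd f ws" using assms(1) ws unfolding zrF_def by (simp add: dvd_eq_mod_eq_0)
  moreover have "m dvd F (del_at j ws) - f (del_at j ws)" if "j < length ws" for j
    using assms(2) del_at_tuples[OF ws that] unfolding zrF_def by (simp add: dvd_eq_mod_eq_0)
  ultimately have "m dvd hcobd F ws" by (rule hcobd_dvd_if_congruent)
  then show "zrF m (hcobd F ws)" unfolding zrF_def by (simp add: dvd_eq_mod_eq_0)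
qed

lemma hcobd_div_congruent:
  fixes P :: int
  assumes "P \<noteq> 0" and "\<And>j. j < length xs \<Longrightarrow> P dvd a (del_at j xs) - b (del_at j xs)"
  shows "hcobd a xs div P = hcobd b xs div P + hcobd (\<lambda>w. (a w - b w) div P) xs"
proof -
  have "hcobd a xs = hcobd (\<lambda>w. b w + P * ((a w - b w) div P)) xs"
    by (rule hcobd_cong) (use assms(2) in auto)
  also have "\<dots> = hcobd b xs + P * hcobd (\<lambda>w. (a w - b w) div P) xs"
    by (simp add: hcobd_add hcobd_mult)
  finally show ?thesis using assms(1) by simp
qed

lemma dvd_div_diff:
  fixes P u v :: int
  assumes "P \<noteq> 0" "P dvd u" "P dvd v" "P\<^sup>2 dvd u - v"
  shows "P dvd u div P - v div P"
proof -
  obtain a b where "u = P * a" "v = P * b" using assms(2,3) by (auto elim!: dvdE)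
  with assms show ?thesis by (simp add: power2_eq_square right_diff_distrib[symmetric])
qed

lemma bockstein_via_lift:
  assumes "hcochain G K act zr (int p ^ 2) r F0" "\<forall>xs\<in>tuples K (Suc r). zr (int p) (F0 xs - f xs)"
  obtains F where "hcochain G K act zr (int p ^ 2) r F"
    "\<forall>xs\<in>tuples K (Suc r). zr (int p) (F xs - f xs)"
    "bockstein G K act zr dv p r f = (\<lambda>xs. dv (int p) (hcobd F xs))"
proof -
  let ?lift = "\<lambda>F. hcochain G K act zr (int p ^ 2) r F \<and> (\<forall>xs\<in>tuples K (Suc r). zr (int p) (F xs - f xs))"
  have "?lift (SOME F. ?lift F)" using someI[of ?lift F0] assms by blast
  then show ?thesis using that unfolding bockstein_def Let_def by blast
qed

context group
begin

lemma centralizer_subgroup: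
  assumes g: "g \<in> carrier G"
  shows "subgroup (centralizer G g) G"
proof (rule subgroup.intro)
  show "centralizer G g \<subseteq> carrier G" unfolding centralizer_def by auto
  show "x \<otimes> y \<in> centralizer G g" if "x \<in> centralizer G g" "y \<in> centralizer G g" for x y
    using that g unfolding centralizer_def by (auto simp: m_assoc) (metis m_assoc)
  show "\<one> \<in> centralizer G g" unfolding centralizer_def using g by auto
  show "inv x \<in> centralizer G g" if "x \<in> centralizer G g" for x
  proof -
    have x: "x \<in> carrier G" and xg: "x \<otimes> g = g \<otimes> x" using that unfolding centralizer_def by auto
    have "inv x \<otimes> g = inv x \<otimes> (g \<otimes> x) \<otimes> inv x" using x g by (simp add: m_assoc)
    also have "\<dots> = inv x \<otimes> (x \<otimes> g) \<otimes> inv x" by (simp add: xg)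
    also have "\<dots> = g \<otimes> inv x" using x g by (simp add: m_assoc[symmetric])
    finally show ?thesis unfolding centralizer_def using x by auto
  qed
qed

lemma conj_eq_iff_centralizer:
  assumes "h \<in> centralizer G g" "a \<in> carrier G" "g \<in> carrier G"
  shows "inv h \<otimes> a \<otimes> h = g \<longleftrightarrow> a = g"
proof -
  have h: "h \<in> carrier G" and hg: "h \<otimes> g = g \<otimes> h" using assms(1) unfolding centralizer_def by auto
  have "inv h \<otimes> a \<otimes> h = inv h \<otimes> g \<otimes> h \<longleftrightarrow> a = g"
    using h assms(2,3) by (metis inv_closed m_closed r_cancel l_cancel)
  moreover have "inv h \<otimes> g \<otimes> h = g" using h assms(3) hg by (metis inv_closed l_inv l_one m_assoc)
  ultimately show ?thesis by simp
qed

lemma rho_in_subgroup: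
  assumes "subgroup H G" "y \<in> carrier G"
  shows "rho G H y \<in> H"
proof -
  have "(SOME z. z \<in> H #> y) \<in> H #> y" using rcos_self[OF assms(2,1)] by (rule someI)
  then obtain h where h: "h \<in> H" "(SOME z. z \<in> H #> y) = h \<otimes> y" unfolding r_coset_def by auto
  have "rho G H y = inv h" unfolding rho_def h(2)
    using h(1) assms subgroup.mem_carrier by (fastforce simp: inv_mult_group m_assoc[symmetric])
  then show ?thesis using h(1) assms(1) subgroup.m_inv_closed by metis
qed

lemma rho_mult:
  assumes "subgroup H G" "y \<in> carrier G" "h \<in> H"
  shows "rho G H (h \<otimes> y) = h \<otimes> rho G H y"
proof -
  have h: "h \<in> carrier G" using assms subgroup.mem_carrier by metis
  have "H #> (h \<otimes> y) = H #> h #> y"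
    using h assms subgroup.subset by (metis coset_mult_assoc)
  then have "H #> (h \<otimes> y) = H #> y" using coset_join2[OF h assms(1,3)] by simp
  moreover have "(SOME z. z \<in> H #> y) \<in> carrier G"
    using someI[of "\<lambda>z. z \<in> H #> y", OF rcos_self[OF assms(2,1)]] r_coset_subset_G[OF subgroup.subset[OF assms(1)] assms(2)]
    by blast
  ultimately show ?thesis unfolding rho_def using h assms(2) by (simp add: m_assoc)
qed

end

abbreviation coset_rep :: "'a set \<Rightarrow> 'a" where
  "coset_rep C \<equiv> SOME s. s \<in> C"

locale group_subgroup = group G + H: subgroup H G for G (structure) and H
begin

lemma left_coset_rep:
  assumes "C \<in> left_cosets G H"
  shows "coset_rep C \<in> carrier G" "C = coset_rep C <# H"
proof -
  obtain a where a: "a \<in> carrier G" "C = a <# H" using assms unfolding left_cosets_def by auto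
  have "a \<in> C" using lcos_self[OF a(1) H.subgroup_axioms] a by simp
  then have s: "coset_rep C \<in> C" by (rule someI)
  then show "coset_rep C \<in> carrier G" using a l_coset_carrier H.subgroup_axioms by blast
  show "C = coset_rep C <# H" using l_repr_independence[OF _ a(1) H.subgroup_axioms] s a by simp
qed

lemma left_cosets_translate_bij:
  assumes x: "x \<in> carrier G"
  shows "bij_betw (\<lambda>C. x <# C) (left_cosets G H) (left_cosets G H)"
  by (rule bij_betw_byWitness[where f' = "\<lambda>C. inv x <# C"])
    (use x H.subset in \<open>auto simp: left_cosets_def lcos_m_assoc m_assoc[symmetric]\<close>)

lemma transfer_conj_act_apply:
  "transfer G H (conj_act G) \<Psi> xs y =
    (\<Sum>C\<in>left_cosets G H. \<Psi> (map (\<lambda>z. rho G H (inv (coset_rep C) \<otimes> z)) xs)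
                                   (inv (coset_rep C) \<otimes> y \<otimes> coset_rep C))"
  unfolding transfer_def Let_def conj_act_def sum_fun_apply ..

lemma transfer_tuples:
  assumes "C \<in> left_cosets G H" "xs \<in> tuples (carrier G) n"
  shows "map (\<lambda>z. rho G H (inv (coset_rep C) \<otimes> z)) xs \<in> tuples H n"
  using assms left_coset_rep(1) rho_in_subgroup[OF H.subgroup_axioms] unfolding tuples_def by auto

lemma transfer_hcobd:
  "hcobd (transfer G H (conj_act G) \<Psi>) xs = transfer G H (conj_act G) (hcobd \<Psi>) xs"
proof
  fix y
  define w where "w C = map (\<lambda>z. rho G H (inv (coset_rep C) \<otimes> z)) xs" for C
  define c where "c C = inv (coset_rep C) \<otimes> y \<otimes> coset_rep C" for C
  define sgn where "sgn j a = (if even j then a else - a)" for j :: nat and a :: int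
  have "hcobd (transfer G H (conj_act G) \<Psi>) xs y =
      (\<Sum>j<length xs. sgn j (transfer G H (conj_act G) \<Psi> (del_at j xs) y))"
    unfolding hcobd_def sum_fun_apply sgn_def by (rule sum.cong) auto
  also have "\<dots> = (\<Sum>j<length xs. \<Sum>C\<in>left_cosets G H. sgn j (\<Psi> (del_at j (w C)) (c C)))"
    unfolding transfer_conj_act_apply w_def c_def sgn_def
    by (rule sum.cong) (auto simp: sum_negf map_del_at)
  also have "\<dots> = (\<Sum>C\<in>left_cosets G H. \<Sum>j<length xs. sgn j (\<Psi> (del_at j (w C)) (c C)))"
    by (rule sum.swap)
  also have "\<dots> = transfer G H (conj_act G) (hcobd \<Psi>) xs y"
    unfolding transfer_conj_act_apply hcobd_def
    by (rule sum.cong) (auto simp: sgn_def w_def c_def sum_fun_apply intro!: sum.cong)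
  finally show "hcobd (transfer G H (conj_act G) \<Psi>) xs y = transfer G H (conj_act G) (hcobd \<Psi>) xs y" .
qed

lemma transfer_diff:
  "transfer G H (conj_act G) \<Psi>\<^sub>1 xs - transfer G H (conj_act G) \<Psi>\<^sub>2 xs =
    transfer G H (conj_act G) (\<lambda>ws. \<Psi>\<^sub>1 ws - \<Psi>\<^sub>2 ws) xs"
  by (rule ext) (simp add: transfer_conj_act_apply sum_subtractf)

lemma transfer_summand_dvd:
  assumes "\<forall>ws\<in>tuples H n. zrFG G m (\<Psi> ws)" "xs \<in> tuples (carrier G) n" "y \<in> carrier G"
    and "C \<in> left_cosets G H"
  shows "m dvd \<Psi> (map (\<lambda>z. rho G H (inv (coset_rep C) \<otimes> z)) xs) (inv (coset_rep C) \<otimes> y \<otimes> coset_rep C)"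
  using assms transfer_tuples left_coset_rep(1) unfolding zrFG_def by (simp add: dvd_eq_mod_eq_0)

lemma transfer_zrFG:
  assumes "\<forall>ws\<in>tuples H n. zrFG G m (\<Psi> ws)" "xs \<in> tuples (carrier G) n"
  shows "zrFG G m (transfer G H (conj_act G) \<Psi> xs)"
  unfolding zrFG_def transfer_conj_act_apply
  using transfer_summand_dvd[OF assms] by (simp add: dvd_sum flip: dvd_eq_mod_eq_0)

lemma transfer_dvFG:
  assumes "\<forall>ws\<in>tuples H n. zrFG G m (\<Psi> ws)" "xs \<in> tuples (carrier G) n" "y \<in> carrier G"
  shows "dvFG m (transfer G H (conj_act G) \<Psi> xs) y = transfer G H (conj_act G) (\<lambda>ws. dvFG m (\<Psi> ws)) xs y"
  unfolding dvFG_def transfer_conj_act_apply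
  using transfer_summand_dvd[OF assms] by (simp add: sum_div_if_dvd)

lemma coset_rep_translate:
  assumes "D \<in> left_cosets G H" "x \<in> carrier G"
  obtains h where "h \<in> H" "coset_rep (x <# D) = x \<otimes> coset_rep D \<otimes> h"
proof -
  have D: "D = coset_rep D <# H" "coset_rep D \<in> carrier G" using left_coset_rep[OF assms(1)] by auto
  have xD: "x <# D \<in> left_cosets G H"
    using left_cosets_translate_bij[OF assms(2)] assms(1) by (auto simp: bij_betw_def)
  define s' where "s' = coset_rep (x <# D)"
  have "s' \<in> x <# D"
    using left_coset_rep[OF xD] lcos_self[OF left_coset_rep(1)[OF xD] H.subgroup_axioms] s'_def by simp
  also have "x <# D = (x \<otimes> coset_rep D) <# H" using D assms(2) H.subset by (metis lcos_m_assoc)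
  finally obtain h where "h \<in> H" "s' = x \<otimes> coset_rep D \<otimes> h" unfolding l_coset_def by auto
  with that show ?thesis unfolding s'_def by blast
qed

lemma transfer_summand_translate:
  assumes \<Psi>: "hcochain G H (conj_act G) (zrFG G) m r \<Psi>"
    and D: "D \<in> left_cosets G H" and xs: "xs \<in> tuples (carrier G) (Suc r)"
    and x: "x \<in> carrier G" and y: "y \<in> carrier G"
  defines "s' \<equiv> coset_rep (x <# D)" and "s \<equiv> coset_rep D"
  shows "m dvd \<Psi> (map (\<lambda>z. rho G H (inv s' \<otimes> z)) (map ((\<otimes>) x) xs)) (inv s' \<otimes> y \<otimes> s')
             - \<Psi> (map (\<lambda>z. rho G H (inv s \<otimes> z)) xs) (inv s \<otimes> (inv x \<otimes> y \<otimes> x) \<otimes> s)"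
proof -
  \<comment> \<open>The two summands differ by the action of some \<open>h \<in> H\<close>, with \<open>s' = x s h\<close>.\<close>
  obtain h where h: "h \<in> H" "s' = x \<otimes> s \<otimes> h"
    using coset_rep_translate[OF D x] unfolding s'_def s_def by blast
  have hc: "h \<in> carrier G" and ih: "inv h \<in> H" using h(1) H.mem_carrier H.m_inv_closed by auto
  have sc: "s \<in> carrier G" using left_coset_rep(1)[OF D] s_def by simp
  define a where "a = inv s \<otimes> (inv x \<otimes> y \<otimes> x) \<otimes> s"
  define ws where "ws = map (\<lambda>z. rho G H (inv s \<otimes> z)) xs"
  have ws: "ws \<in> tuples H (Suc r)" unfolding ws_def s_def by (rule transfer_tuples[OF D xs])
  have tuple: "map (\<lambda>z. rho G H (inv s' \<otimes> z)) (map ((\<otimes>) x) xs) = map ((\<otimes>) (inv h)) ws"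
    unfolding ws_def map_map o_def
  proof (rule map_cong[OF refl])
    fix z assume "z \<in> set xs"
    then have zc: "z \<in> carrier G" using xs unfolding tuples_def by auto
    have "inv s' \<otimes> (x \<otimes> z) = inv h \<otimes> (inv s \<otimes> z)"
      unfolding h(2) using x zc sc hc by (simp add: inv_mult_group m_assoc) (simp add: m_assoc[symmetric])
    then show "rho G H (inv s' \<otimes> (x \<otimes> z)) = inv h \<otimes> rho G H (inv s \<otimes> z)"
      using rho_mult[OF H.subgroup_axioms _ ih] zc sc by simp
  qed
  have point: "inv s' \<otimes> y \<otimes> s' = inv h \<otimes> a \<otimes> h"
    unfolding h(2) a_def using x y sc hc by (simp add: inv_mult_group m_assoc)
  have "inv h \<otimes> a \<otimes> h \<in> carrier G" unfolding a_def using x y sc hc by simp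
  then have "(\<Psi> (map ((\<otimes>) (inv h)) ws) - conj_act G (inv h) (\<Psi> ws)) (inv h \<otimes> a \<otimes> h) mod m = 0"
    using \<Psi> ws ih unfolding hcochain_def zrFG_def by blast
  moreover have "inv (inv h) \<otimes> (inv h \<otimes> a \<otimes> h) \<otimes> inv h = a"
    unfolding a_def using x y sc hc by (simp add: m_assoc) (simp add: m_assoc[symmetric])
  ultimately show ?thesis
    unfolding tuple point conj_act_def a_def[symmetric] ws_def[symmetric] by (simp add: dvd_eq_mod_eq_0)
qed

lemma hcochain_transfer:
  assumes "hcochain G H (conj_act G) (zrFG G) m r \<Psi>"
  shows "hcochain G (carrier G) (conj_act G) (zrFG G) m r (transfer G H (conj_act G) \<Psi>)"
proof (unfold hcochain_def zrFG_def, intro ballI)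
  fix xs x y assume xs: "xs \<in> tuples (carrier G) (Suc r)" and x: "x \<in> carrier G" and y: "y \<in> carrier G"
  define summand where "summand xs' y' C = \<Psi> (map (\<lambda>z. rho G H (inv (coset_rep C) \<otimes> z)) xs')
    (inv (coset_rep C) \<otimes> y' \<otimes> coset_rep C)" for xs' y' C
  have "transfer G H (conj_act G) \<Psi> (map ((\<otimes>) x) xs) y =
      (\<Sum>D\<in>left_cosets G H. summand (map ((\<otimes>) x) xs) y (x <# D))"
    unfolding transfer_conj_act_apply summand_def
    by (rule sum.reindex_bij_betw[symmetric, OF left_cosets_translate_bij[OF x]])
  moreover have "transfer G H (conj_act G) \<Psi> xs (inv x \<otimes> y \<otimes> x) =
      (\<Sum>D\<in>left_cosets G H. summand xs (inv x \<otimes> y \<otimes> x) D)"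
    unfolding transfer_conj_act_apply summand_def ..
  ultimately have "m dvd transfer G H (conj_act G) \<Psi> (map ((\<otimes>) x) xs) y
      - transfer G H (conj_act G) \<Psi> xs (inv x \<otimes> y \<otimes> x)"
    using transfer_summand_translate[OF assms _ xs x y] unfolding summand_def
    by (simp add: dvd_sum flip: sum_subtractf)
  then show "(transfer G H (conj_act G) \<Psi> (map ((\<otimes>) x) xs)
      - conj_act G x (transfer G H (conj_act G) \<Psi> xs)) y mod m = 0"
    unfolding conj_act_def by (simp add: dvd_eq_mod_eq_0)
qed

lemma trivial_action_invariant_lift:
  assumes f: "hcochain G H actT zrF m r f"
  shows "\<exists>F. hcochain G H actT zrF n r F \<and> (\<forall>xs\<in>tuples H (Suc r). zrF m (F xs - f xs))"
proof -
  \<comment> \<open>Translating the first entry to \<open>\<one>\<close> makes \<open>F\<close> exactly invariant; as \<open>H\<close> acts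
    trivially, \<open>F\<close> still agrees with \<open>f\<close> modulo \<open>m\<close>.\<close>
  define F where "F xs = f (map ((\<otimes>) (inv (hd xs))) xs)" for xs
  have invariant: "F (map ((\<otimes>) k) xs) = F xs" if xs: "xs \<in> tuples H (Suc r)" and k: "k \<in> H" for xs k
  proof -
    obtain x0 xt where xs0: "xs = x0 # xt" using xs unfolding tuples_def by (cases xs) auto
    have x0: "x0 \<in> carrier G" and kc: "k \<in> carrier G"
      using xs xs0 k H.subset unfolding tuples_def by auto
    have "F (map ((\<otimes>) k) xs) = f (map ((\<otimes>) (inv (k \<otimes> x0))) (map ((\<otimes>) k) xs))"
      unfolding F_def using xs0 by simp
    also have "map ((\<otimes>) (inv (k \<otimes> x0))) (map ((\<otimes>) k) xs) = map ((\<otimes>) (inv x0)) xs"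
      unfolding map_map o_def
    proof (rule map_cong[OF refl])
      fix y assume "y \<in> set xs"
      then have "y \<in> carrier G" using xs H.subset unfolding tuples_def by auto
      then show "inv (k \<otimes> x0) \<otimes> (k \<otimes> y) = inv x0 \<otimes> y" using kc x0
        by (simp add: inv_mult_group m_assoc) (simp add: m_assoc[symmetric])
    qed
    also have "f (map ((\<otimes>) (inv x0)) xs) = F xs" unfolding F_def using xs0 by simp
    finally show ?thesis .
  qed
  have "zrF m (F xs - f xs)" if xs: "xs \<in> tuples H (Suc r)" for xs
  proof -
    obtain x0 xt where xs0: "xs = x0 # xt" using xs unfolding tuples_def by (cases xs) auto
    then have "inv x0 \<in> H" using xs H.m_inv_closed unfolding tuples_def by auto
    then have "zrF m (f (map ((\<otimes>) (inv x0)) xs) - f xs)"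
      using f xs unfolding hcochain_def actT_def by blast
    moreover have "F xs = f (map ((\<otimes>) (inv x0)) xs)" unfolding F_def xs0 by (simp only: list.sel(1))
    ultimately show ?thesis by simp
  qed
  moreover have "hcochain G H actT zrF n r F"
    unfolding hcochain_def actT_def zrF_def by (simp add: invariant)
  ultimately show ?thesis by blast
qed

end

lemma theta_diff: "theta g a - theta g b = theta g (a - b)"
  by (auto simp: theta_def)

lemma hcobd_theta: "hcobd (\<lambda>w. theta g (\<Phi> w)) xs = theta g (hcobd \<Phi> xs)"
proof
  fix y
  have "hcobd (\<lambda>w. theta g (\<Phi> w)) xs y = hcobd (\<lambda>w. theta g (\<Phi> w) y) xs" by (rule hcobd_apply)
  also have "\<dots> = theta g (hcobd \<Phi> xs) y" by (cases "y = g") (simp_all add: theta_def hcobd_def cong: if_cong)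
  finally show "hcobd (\<lambda>w. theta g (\<Phi> w)) xs y = theta g (hcobd \<Phi> xs) y" .
qed

lemma dvFG_theta: "dvFG m (theta g u) = theta g (dvF m u)"
  by (auto simp: dvFG_def dvF_def theta_def)

lemma zrFG_theta: "g \<in> carrier G \<Longrightarrow> zrFG G m (theta g u) \<longleftrightarrow> zrF m u"
  by (auto simp: zrFG_def zrF_def theta_def)

lemma cohom_eq_zrFG_cong:
  assumes "cohom_eq G (carrier G) (conj_act G) (zrFG G) m (Suc q) u v"
    and "\<forall>xs\<in>tuples (carrier G) (Suc (Suc q)). \<forall>y\<in>carrier G. v xs y = v' xs y"
  shows "cohom_eq G (carrier G) (conj_act G) (zrFG G) m (Suc q) u v'"
  using assms unfolding cohom_eq_def zrFG_def by auto

context group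
begin

lemma group_subgroup_centralizer: "g \<in> carrier G \<Longrightarrow> group_subgroup G (centralizer G g)"
  by (simp add: group_subgroup_def group_axioms centralizer_subgroup)

lemma hcochain_theta:
  assumes g: "g \<in> carrier G" and \<Phi>: "hcochain G (centralizer G g) actT zrF m r \<Phi>"
  shows "hcochain G (centralizer G g) (conj_act G) (zrFG G) m r (\<lambda>ws. theta g (\<Phi> ws))"
proof (unfold hcochain_def zrFG_def, intro ballI)
  fix xs k y assume xs: "xs \<in> tuples (centralizer G g) (Suc r)" and k: "k \<in> centralizer G g"
    and y: "y \<in> carrier G"
  have "inv k \<otimes> y \<otimes> k = g \<longleftrightarrow> y = g" by (rule conj_eq_iff_centralizer[OF k y g])
  then show "(theta g (\<Phi> (map ((\<otimes>) k) xs)) - conj_act G k (theta g (\<Phi> xs))) y mod m = 0"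
    using \<Phi> xs k unfolding hcochain_def zrF_def actT_def conj_act_def theta_def by auto
qed

lemma hcochain_gamma:
  assumes "g \<in> carrier G" "hcochain G (centralizer G g) actT zrF m r \<Phi>"
  shows "hcochain G (carrier G) (conj_act G) (zrFG G) m r (gamma G g \<Phi>)"
proof -
  interpret group_subgroup G "centralizer G g" by (rule group_subgroup_centralizer[OF assms(1)])
  show ?thesis unfolding gamma_def by (rule hcochain_transfer[OF hcochain_theta[OF assms]])
qed

lemma gamma_congruent:
  assumes "g \<in> carrier G" "\<forall>ws\<in>tuples (centralizer G g) n. zrF m (\<Phi>\<^sub>1 ws - \<Phi>\<^sub>2 ws)"
    and "xs \<in> tuples (carrier G) n"
  shows "zrFG G m (gamma G g \<Phi>\<^sub>1 xs - gamma G g \<Phi>\<^sub>2 xs)"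
proof -
  interpret group_subgroup G "centralizer G g" by (rule group_subgroup_centralizer[OF assms(1)])
  show ?thesis unfolding gamma_def transfer_diff theta_diff
    using assms by (intro transfer_zrFG) (auto simp: zrFG_theta)
qed

lemma gamma_hcobd_dvFG:
  assumes "g \<in> carrier G" "\<forall>ws\<in>tuples (centralizer G g) n. zrF m (hcobd \<Phi> ws)"
    and "xs \<in> tuples (carrier G) n" "y \<in> carrier G"
  shows "dvFG m (hcobd (gamma G g \<Phi>) xs) y = gamma G g (\<lambda>ws. dvF m (hcobd \<Phi> ws)) xs y"
proof -
  interpret group_subgroup G "centralizer G g" by (rule group_subgroup_centralizer[OF assms(1)])
  show ?thesis unfolding gamma_def transfer_hcobd hcobd_theta
    using assms by (subst transfer_dvFG) (auto simp: zrFG_theta dvFG_theta)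
qed

lemma cohom_eq_bockstein_of_lifts:
  fixes P :: int
  assumes P: "P \<noteq> 0"
    and F\<^sub>1: "hcochain G (carrier G) (conj_act G) (zrFG G) (P\<^sup>2) r F\<^sub>1"
    and F\<^sub>2: "hcochain G (carrier G) (conj_act G) (zrFG G) (P\<^sup>2) r F\<^sub>2"
    and lift\<^sub>1: "\<forall>xs\<in>tuples (carrier G) (Suc r). zrFG G P (F\<^sub>1 xs - u xs)"
    and lift\<^sub>2: "\<forall>xs\<in>tuples (carrier G) (Suc r). zrFG G P (F\<^sub>2 xs - u xs)"
  shows "cohom_eq G (carrier G) (conj_act G) (zrFG G) P (Suc r)
           (\<lambda>xs. dvFG P (hcobd F\<^sub>1 xs)) (\<lambda>xs. dvFG P (hcobd F\<^sub>2 xs))"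
proof -
  define h where "h xs y = (F\<^sub>1 xs y - F\<^sub>2 xs y) div P" for xs y
  have diff: "P dvd F\<^sub>1 xs y - F\<^sub>2 xs y" if "xs \<in> tuples (carrier G) (Suc r)" "y \<in> carrier G" for xs y
    using dvd_diff[of P "F\<^sub>1 xs y - u xs y" "F\<^sub>2 xs y - u xs y"] lift\<^sub>1 lift\<^sub>2 that
    unfolding zrFG_def by (simp add: dvd_eq_mod_eq_0)
  have "hcochain G (carrier G) (conj_act G) (zrFG G) P r h"
  proof (unfold hcochain_def zrFG_def, intro ballI)
    fix xs x y assume xs: "xs \<in> tuples (carrier G) (Suc r)" and x: "x \<in> carrier G" and y: "y \<in> carrier G"
    have xs': "map ((\<otimes>) x) xs \<in> tuples (carrier G) (Suc r)" using xs x unfolding tuples_def by auto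
    have y': "inv x \<otimes> y \<otimes> x \<in> carrier G" using x y by simp
    have "P\<^sup>2 dvd F\<^sub>i (map ((\<otimes>) x) xs) y - F\<^sub>i xs (inv x \<otimes> y \<otimes> x)"
      if "hcochain G (carrier G) (conj_act G) (zrFG G) (P\<^sup>2) r F\<^sub>i" for F\<^sub>i
      using that xs x y unfolding hcochain_def zrFG_def conj_act_def by (simp add: dvd_eq_mod_eq_0)
    from dvd_diff[OF this[OF F\<^sub>1] this[OF F\<^sub>2]]
    have "P dvd h (map ((\<otimes>) x) xs) y - h xs (inv x \<otimes> y \<otimes> x)"
      unfolding h_def by (intro dvd_div_diff[OF P diff[OF xs' y] diff[OF xs y']]) (simp add: algebra_simps)
    then show "(h (map ((\<otimes>) x) xs) - conj_act G x (h xs)) y mod P = 0"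
      unfolding conj_act_def by (simp add: dvd_eq_mod_eq_0)
  qed
  moreover have "dvFG P (hcobd F\<^sub>1 xs) y = dvFG P (hcobd F\<^sub>2 xs) y + hcobd h xs y"
    if xs: "xs \<in> tuples (carrier G) (Suc (Suc r))" and y: "y \<in> carrier G" for xs y
    unfolding dvFG_def hcobd_apply[of F\<^sub>1] hcobd_apply[of F\<^sub>2] hcobd_apply[of h] h_def
    using hcobd_div_congruent[of P xs "\<lambda>w. F\<^sub>1 w y" "\<lambda>w. F\<^sub>2 w y", OF P diff[OF del_at_tuples[OF xs] y]]
    by simp
  ultimately show ?thesis unfolding cohom_eq_def zrFG_def by auto
qed

end

theorem lemma2p3:
  fixes G :: "('g, 'b) monoid_scheme" and p :: nat and g :: 'g and r :: nat
    and f :: "'g list \<Rightarrow> int"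
  assumes "group G" and "finite (carrier G)" and "Factorial_Ring.prime p" and "p dvd order G"
    and "g \<in> carrier G"
    and "hcocycle G (centralizer G g) actT zrF (int p) r f"
  shows "cohom_eq G (carrier G) (conj_act G) (zrFG G) (int p) (Suc r)
           (bockstein G (carrier G) (conj_act G) (zrFG G) dvFG p r (gamma G g f))
           (gamma G g (bockstein G (centralizer G g) actT zrF dvF p r f))"
proof -
  interpret group G by (rule assms(1))
  interpret H: group_subgroup G "centralizer G g" by (rule group_subgroup_centralizer[OF assms(5)])
  have p: "int p \<noteq> 0" using assms(3) by auto
  obtain F where F: "hcochain G (centralizer G g) actT zrF (int p ^ 2) r F"
      "\<forall>xs\<in>tuples (centralizer G g) (Suc r). zrF (int p) (F xs - f xs)"
    and \<beta>\<^sub>H: "bockstein G (centralizer G g) actT zrF dvF p r f = (\<lambda>xs. dvF (int p) (hcobd F xs))"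
  proof -
    from assms(6) obtain F\<^sub>0 where "hcochain G (centralizer G g) actT zrF (int p ^ 2) r F\<^sub>0"
        "\<forall>xs\<in>tuples (centralizer G g) (Suc r). zrF (int p) (F\<^sub>0 xs - f xs)"
      using H.trivial_action_invariant_lift unfolding hcocycle_def by blast
    then show thesis using that by (rule bockstein_via_lift)
  qed
  have dF: "\<forall>ws\<in>tuples (centralizer G g) (Suc (Suc r)). zrF (int p) (hcobd F ws)"
    using zrF_hcobd_of_congruent assms(6) F(2) unfolding hcocycle_def by blast
  have \<gamma>F: "hcochain G (carrier G) (conj_act G) (zrFG G) (int p ^ 2) r (gamma G g F)"
    "\<forall>xs\<in>tuples (carrier G) (Suc r). zrFG G (int p) (gamma G g F xs - gamma G g f xs)"
    using hcochain_gamma[OF assms(5) F(1)] gamma_congruent[OF assms(5) F(2)] by auto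
  obtain F' where F': "hcochain G (carrier G) (conj_act G) (zrFG G) (int p ^ 2) r F'"
      "\<forall>xs\<in>tuples (carrier G) (Suc r). zrFG G (int p) (F' xs - gamma G g f xs)"
    and \<beta>\<^sub>G: "bockstein G (carrier G) (conj_act G) (zrFG G) dvFG p r (gamma G g f) =
      (\<lambda>xs. dvFG (int p) (hcobd F' xs))"
    using bockstein_via_lift[OF \<gamma>F(1), of "gamma G g f"] \<gamma>F(2) by blast
  have "cohom_eq G (carrier G) (conj_act G) (zrFG G) (int p) (Suc r)
      (\<lambda>xs. dvFG (int p) (hcobd F' xs)) (\<lambda>xs. dvFG (int p) (hcobd (gamma G g F) xs))"
    by (rule cohom_eq_bockstein_of_lifts[OF p F'(1) \<gamma>F(1) F'(2) \<gamma>F(2)])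
  then show ?thesis
    unfolding \<beta>\<^sub>G \<beta>\<^sub>H
    by (rule cohom_eq_zrFG_cong) (simp add: gamma_hcobd_dvFG[OF assms(5) dF])
qed

end
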